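(* Assume $0<\bar p<1$ and let $\hat{\mathcal C}=\{c\in\mathcal C:\ p_c\ge\bar p\}$. Suppose further: (i) there exist probability distributions $P_0,P_1$ on $\mathcal Y$ and a map $\lambda:\mathcal C\to[0,1]$ such that for every $c\in\mathcal C$, $P_{Y\mid C=c}=P_{\lambda(c)}:=(1-\lambda(c))P_0+\lambda(c)P_1$; set $\bar\lambda=\mathbb E[\lambda(C)]$, so that $P_Y=P_{\bar\lambda}$; (ii) (monotone alignment) for all $c_1,c_2\in S:=\{c\in\hat{\mathcal C}:\lambda(c)\ge\bar\lambda\}$, $\mathrm{IG}(Z;C=c_1)\ge\mathrm{IG}(Z;C=c_2)$ implies $\lambda(c_1)\ge\lambda(c_2)$. Then for all $c_1,c_2\in S$, $$\mathrm{IG}(Z;C=c_1)\ge\mathrm{IG}(Z;C=c_2)\implies \mathrm{IG}(Y;C=c_1)\ge\mathrm{IG}(Y;C=c_2),$$ and every maximizer of $c\mapsto\mathrm{IG}(Z;C=c)$ over $S$ is a maximizer of $c\mapsto\mathrm{IG}(Y;C=c)$ over $S$, i.e. $\operatorname*{argmax}_{c\in S}\mathrm{IG}(Z;C=c)\subseteq\operatorname*{argmax}_{c\in S}\mathrm{IG}(Y;C=c)$. In particular, if $S\neq\emptyset$ and $\mathrm{IG}(Y;C=\cdot)$ has a unique maximizer over $S$, then $\operatorname*{argmax}_{c\in S}\mathrm{IG}(Z;C=c)=\operatorname*{argmax}_{c\in S}\mathrm{IG}(Y;C=c)$.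
   Context: Let $(C,Y,Z)$ be jointly distributed random variables, where $C$ takes values in a finite set $\mathcal C$ of candidate evidences with $P(C=c)>0$ for every $c\in\mathcal C$, $Y$ takes values in a finite set $\mathcal Y$, and $Z\in\{0,1\}$ (a Bernoulli "helpfulness" variable). Write $P_{Y\mid C=c}$, $P_Y$, $P_{Z\mid C=c}$, $P_Z$ for the conditional and marginal laws. Define $p_c=P(Z=1\mid C=c)$ and $\bar p=P(Z=1)$, so $P_{Z\mid C=c}=\mathrm{Bern}(p_c)$ and $P_Z=\mathrm{Bern}(\bar p)$. For distributions $\mu,\mu'$ on a finite set, $D_{\mathrm{KL}}(\mu\|\mu')=\sum_y\mu(y)\log\frac{\mu(y)}{\mu'(y)}\in[0,\infty]$ (with $0\log 0=0$, and value $+\infty$ if $\mu$ is not absolutely continuous w.r.t. $\mu'$). The evidence-wise information gains are $\mathrm{IG}(Y;C=c)=D_{\mathrm{KL}}(P_{Y\mid C=c}\,\|\,P_Y)$ and $\mathrm{IG}(Z;C=c)=D_{\mathrm{KL}}(P_{Z\mid C=c}\,\|\,P_Z)$. $\operatorname{argmax}$ denotes the set of maximizers. *)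

theory Defs
  imports "HOL-Probability.Probability"
begin

text \<open>The joint law of (C,Y,Z) is a pmf on 'c \<times> 'y \<times> bool; Z = True means Z = 1.\<close>

definition probC :: "('c \<times> 'y \<times> bool) pmf \<Rightarrow> 'c \<Rightarrow> real" where
  "probC P c = measure_pmf.prob P {x. fst x = c}"

definition condY :: "('c \<times> 'y \<times> bool) pmf \<Rightarrow> 'c \<Rightarrow> 'y \<Rightarrow> real" where
  "condY P c y = measure_pmf.prob P {x. fst x = c \<and> fst (snd x) = y} / probC P c"

definition margY :: "('c \<times> 'y \<times> bool) pmf \<Rightarrow> 'y \<Rightarrow> real" where
  "margY P y = measure_pmf.prob P {x. fst (snd x) = y}"

definition condZ :: "('c \<times> 'y \<times> bool) pmf \<Rightarrow> 'c \<Rightarrow> bool \<Rightarrow> real" where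
  "condZ P c z = measure_pmf.prob P {x. fst x = c \<and> snd (snd x) = z} / probC P c"

definition margZ :: "('c \<times> 'y \<times> bool) pmf \<Rightarrow> bool \<Rightarrow> real" where
  "margZ P z = measure_pmf.prob P {x. snd (snd x) = z}"

definition pc :: "('c \<times> 'y \<times> bool) pmf \<Rightarrow> 'c \<Rightarrow> real" where
  "pc P c = condZ P c True"

definition pbar :: "('c \<times> 'y \<times> bool) pmf \<Rightarrow> real" where
  "pbar P = margZ P True"

definition KL :: "('a::finite \<Rightarrow> real) \<Rightarrow> ('a \<Rightarrow> real) \<Rightarrow> ereal" where
  "KL \<mu> \<mu>' = (if (\<forall>y. \<mu>' y = 0 \<longrightarrow> \<mu> y = 0)
     then ereal (\<Sum>y\<in>UNIV. if \<mu> y = 0 then 0 else \<mu> y * ln (\<mu> y / \<mu>' y))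
     else \<infinity>)"

definition IG_Y :: "('c \<times> 'y::finite \<times> bool) pmf \<Rightarrow> 'c \<Rightarrow> ereal" where
  "IG_Y P c = KL (condY P c) (margY P)"

definition IG_Z :: "('c \<times> 'y \<times> bool) pmf \<Rightarrow> 'c \<Rightarrow> ereal" where
  "IG_Z P c = KL (condZ P c) (margZ P)"

definition argmax_on :: "('a \<Rightarrow> 'b::linorder) \<Rightarrow> 'a set \<Rightarrow> 'a set" where
  "argmax_on f S = {x \<in> S. \<forall>y\<in>S. f y \<le> f x}"

end

theory Submission imports Defs begin

text \<open>Under the mixture hypothesis the marginal of Y is the mixture with the mean weight
  lam_bar, so IG(Y; C=c) = KL(P_(lam c) || P_lam_bar), where P_t = (1 - t) P0 + t P1 is
  mix_mass P0 P1 t. As a function of the mixing weight this divergence is convex and vanishes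
  at lam_bar, hence it is nondecreasing on [lam_bar, 1]. On S the alignment hypothesis makes
  lam, and therefore IG(Y; C=.), monotone in IG(Z; C=.); the statements about maximizers
  follow.\<close>

definition rel_entr :: "real \<Rightarrow> real \<Rightarrow> real" where
  "rel_entr a b = (if a = 0 then 0 else a * ln (a / b))"

lemma KL_eq_sum_rel_entr:
  "KL \<mu> \<mu>' = (if \<forall>y. \<mu>' y = 0 \<longrightarrow> \<mu> y = 0
     then ereal (\<Sum>y\<in>UNIV. rel_entr (\<mu> y) (\<mu>' y)) else \<infinity>)"
  by (simp add: KL_def rel_entr_def)

lemma rel_entr_ge_diff:
  assumes "0 \<le> a" "0 \<le> b" "b = 0 \<Longrightarrow> a = 0"
  shows "a - b \<le> rel_entr a b"
proof (cases "a = 0")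
  case False
  with assms have a: "a > 0" and b: "b > 0" by fastforce+
  have "1 - b / a \<le> ln (a / b)"
    using ln_le_minus_one[of "b / a"] a b by (simp add: ln_div)
  then have "a * (1 - b / a) \<le> a * ln (a / b)"
    using a by (intro mult_left_mono) auto
  with a show ?thesis by (simp add: rel_entr_def algebra_simps)
qed (use assms in \<open>simp add: rel_entr_def\<close>)

lemma convex_on_rel_entr:
  assumes "b > 0"
  shows "convex_on {0<..} (\<lambda>a. rel_entr a b)"
proof (rule convex_on_realI[where f' = "\<lambda>a. ln a + 1 - ln b"])
  fix a :: real assume a: "a \<in> {0<..}"
  have "((\<lambda>a. a * ln a - a * ln b) has_real_derivative ln a + 1 - ln b) (at a)"
    using a by (auto intro!: derivative_eq_intros)
  then show "((\<lambda>a. rel_entr a b) has_real_derivative ln a + 1 - ln b) (at a)"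
    by (rule has_field_derivative_transform_within_open[of _ _ _ "{0<..}"])
       (use a assms in \<open>auto simp: rel_entr_def ln_div algebra_simps\<close>)
qed auto

lemma rel_entr_mix_le:
  assumes "0 \<le> a" "0 \<le> b" "b = 0 \<Longrightarrow> a = 0" and "0 \<le> \<theta>" "\<theta> \<le> 1"
  shows "rel_entr (\<theta> * b + (1 - \<theta>) * a) b \<le> (1 - \<theta>) * rel_entr a b"
proof -
  consider "b = 0" | "b > 0" "a = 0" | "b > 0" "a > 0"
    using assms by fastforce
  then show ?thesis
  proof cases
    case 1
    with assms show ?thesis by (simp add: rel_entr_def)
  next
    case 2
    have "\<theta> * b * ln \<theta> \<le> 0"
      using 2 assms by (cases "\<theta> = 0") (auto intro!: mult_nonneg_nonpos)
    with 2 show ?thesis by (simp add: rel_entr_def)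
  next
    case 3
    have "rel_entr ((1 - (1 - \<theta>)) * b + (1 - \<theta>) * a) b
        \<le> (1 - (1 - \<theta>)) * rel_entr b b + (1 - \<theta>) * rel_entr a b"
      using convex_onD[OF convex_on_rel_entr[OF \<open>b > 0\<close>], of "1 - \<theta>" b a] 3 assms by simp
    with 3 show ?thesis by (simp add: rel_entr_def)
  qed
qed

lemma KL_nonneg:
  fixes p q :: "'a::finite \<Rightarrow> real"
  assumes "\<And>y. 0 \<le> p y" "\<And>y. 0 \<le> q y" "(\<Sum>y\<in>UNIV. p y) = 1" "(\<Sum>y\<in>UNIV. q y) = 1"
  shows "0 \<le> KL p q"
proof (cases "\<forall>y. q y = 0 \<longrightarrow> p y = 0")
  case True
  have "(\<Sum>y\<in>UNIV. p y - q y) \<le> (\<Sum>y\<in>UNIV. rel_entr (p y) (q y))"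
    by (intro sum_mono rel_entr_ge_diff) (use assms True in auto)
  with assms True show ?thesis by (simp add: KL_eq_sum_rel_entr sum_subtractf)
qed (auto simp: KL_eq_sum_rel_entr)

lemma KL_mix_le:
  fixes p q :: "'a::finite \<Rightarrow> real"
  assumes "\<And>y. 0 \<le> p y" "(\<Sum>y\<in>UNIV. p y) = 1"
    and "\<And>y. 0 \<le> q y" "(\<Sum>y\<in>UNIV. q y) = 1"
    and "0 \<le> \<theta>" "\<theta> \<le> 1"
  shows "KL (\<lambda>y. \<theta> * q y + (1 - \<theta>) * p y) q \<le> KL p q"
proof (cases "\<forall>y. q y = 0 \<longrightarrow> p y = 0")
  case True
  have "(\<Sum>y\<in>UNIV. rel_entr (\<theta> * q y + (1 - \<theta>) * p y) (q y))
      \<le> (\<Sum>y\<in>UNIV. (1 - \<theta>) * rel_entr (p y) (q y))"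
    by (intro sum_mono rel_entr_mix_le) (use assms True in auto)
  also have "\<dots> = (1 - \<theta>) * (\<Sum>y\<in>UNIV. rel_entr (p y) (q y))"
    by (simp add: sum_distrib_left)
  also have "\<dots> \<le> (\<Sum>y\<in>UNIV. rel_entr (p y) (q y))"
    using KL_nonneg[of p q] assms True
    by (intro mult_left_le_one_le) (auto simp: KL_eq_sum_rel_entr)
  finally show ?thesis
    using True by (simp add: KL_eq_sum_rel_entr)
qed (auto simp: KL_eq_sum_rel_entr)

definition mix_mass :: "'a pmf \<Rightarrow> 'a pmf \<Rightarrow> real \<Rightarrow> 'a \<Rightarrow> real" where
  "mix_mass P0 P1 t y = (1 - t) * pmf P0 y + t * pmf P1 y"

lemma mix_mass_nonneg: "0 \<le> t \<Longrightarrow> t \<le> 1 \<Longrightarrow> 0 \<le> mix_mass P0 P1 t y"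
  by (simp add: mix_mass_def)

lemma sum_mix_mass: "(\<Sum>y\<in>UNIV. mix_mass P0 P1 t (y::'a::finite)) = 1"
  by (simp add: mix_mass_def sum.distrib sum_distrib_left[symmetric] sum_pmf_eq_1)

lemma mix_mass_affine:
  "mix_mass P0 P1 (\<theta> * s + (1 - \<theta>) * t)
     = (\<lambda>y. \<theta> * mix_mass P0 P1 s y + (1 - \<theta>) * mix_mass P0 P1 t y)"
  by (simp add: fun_eq_iff mix_mass_def algebra_simps)

lemma KL_mix_mass_mono:
  fixes P0 P1 :: "'a::finite pmf"
  assumes "0 \<le> l" "l \<le> a" "a \<le> b" "b \<le> 1"
  shows "KL (mix_mass P0 P1 a) (mix_mass P0 P1 l) \<le> KL (mix_mass P0 P1 b) (mix_mass P0 P1 l)"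
proof (cases "b = l")
  case False
  define \<theta> where "\<theta> = (b - a) / (b - l)"
  have "b - l > 0"
    using assms False by simp
  then have "0 \<le> \<theta>" "\<theta> \<le> 1" and "\<theta> * (b - l) = b - a"
    using assms by (simp_all add: \<theta>_def divide_simps)
  moreover from this(3) have "a = \<theta> * l + (1 - \<theta>) * b"
    by (simp add: algebra_simps)
  ultimately show ?thesis
    using KL_mix_le[of "mix_mass P0 P1 b" "mix_mass P0 P1 l" \<theta>] assms
    by (simp add: mix_mass_affine mix_mass_nonneg sum_mix_mass)
qed (use assms in simp)

lemma prob_eq_sum_prob_fst:
  fixes P :: "('c::finite \<times> 'b) pmf"
  shows "measure_pmf.prob P A = (\<Sum>c\<in>UNIV. measure_pmf.prob P {x \<in> A. fst x = c})"
proof -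
  have "measure_pmf.prob P (\<Union>c\<in>UNIV. {x \<in> A. fst x = c})
      = (\<Sum>c\<in>UNIV. measure_pmf.prob P {x \<in> A. fst x = c})"
    by (rule measure_pmf.finite_measure_finite_Union) (auto simp: disjoint_family_on_def)
  moreover have "(\<Union>c\<in>UNIV. {x \<in> A. fst x = c}) = A"
    by auto
  ultimately show ?thesis
    by simp
qed

lemma sum_probC: "(\<Sum>c\<in>UNIV. probC P (c::'c::finite)) = 1"
  using prob_eq_sum_prob_fst[of P UNIV] by (simp add: probC_def)

lemma margY_eq_sum_condY:
  fixes P :: "('c::finite \<times> 'y \<times> bool) pmf"
  assumes "\<forall>c. probC P c > 0"
  shows "margY P y = (\<Sum>c\<in>UNIV. probC P c * condY P c y)"
  using prob_eq_sum_prob_fst[of P "{x. fst (snd x) = y}"] assms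
  by (simp add: margY_def condY_def conj_commute less_imp_neq[symmetric])

lemma IG_Y_mixture:
  fixes P :: "('c::finite \<times> 'y::finite \<times> bool) pmf"
  assumes "\<forall>c. probC P c > 0"
    and mix: "\<forall>c y. condY P c y = (1 - lam c) * pmf P0 y + lam c * pmf P1 y"
  shows "IG_Y P c = KL (mix_mass P0 P1 (lam c)) (mix_mass P0 P1 (\<Sum>c'\<in>UNIV. probC P c' * lam c'))"
proof -
  have "margY P = mix_mass P0 P1 (\<Sum>c'\<in>UNIV. probC P c' * lam c')"
  proof
    fix y
    have "margY P y = (\<Sum>c\<in>UNIV. probC P c * pmf P0 y + probC P c * lam c * (pmf P1 y - pmf P0 y))"
      using margY_eq_sum_condY[OF assms(1)] mix by (simp add: algebra_simps)
    also have "\<dots> = (\<Sum>c\<in>UNIV. probC P c) * pmf P0 y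
        + (\<Sum>c\<in>UNIV. probC P c * lam c) * (pmf P1 y - pmf P0 y)"
      unfolding sum.distrib sum_distrib_right[symmetric] ..
    also have "\<dots> = mix_mass P0 P1 (\<Sum>c'\<in>UNIV. probC P c' * lam c') y"
      by (simp add: sum_probC mix_mass_def algebra_simps)
    finally show "margY P y = mix_mass P0 P1 (\<Sum>c'\<in>UNIV. probC P c' * lam c') y" .
  qed
  moreover have "condY P c = mix_mass P0 P1 (lam c)"
    using mix by (simp add: fun_eq_iff mix_mass_def)
  ultimately show ?thesis
    by (simp add: IG_Y_def)
qed

lemma argmax_on_subset_if_mono:
  assumes "\<forall>x\<in>S. \<forall>y\<in>S. f x \<ge> f y \<longrightarrow> g x \<ge> g y"
  shows "argmax_on f S \<subseteq> argmax_on g S"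
  using assms by (auto simp: argmax_on_def)

lemma argmax_on_nonempty:
  assumes "finite S" "S \<noteq> {}"
  shows "argmax_on f S \<noteq> {}"
proof -
  have "Max (f ` S) \<in> f ` S"
    using assms by simp
  then obtain x where "x \<in> S" "f x = Max (f ` S)"
    by auto
  with assms show ?thesis by (auto simp: argmax_on_def)
qed

lemma argmax_on_eq_if_unique:
  assumes "finite S" "S \<noteq> {}" "argmax_on f S \<subseteq> argmax_on g S" "\<exists>!x. x \<in> argmax_on g S"
  shows "argmax_on f S = argmax_on g S"
proof -
  obtain x where "x \<in> argmax_on f S"
    using argmax_on_nonempty[OF assms(1,2)] by blast
  with assms(3,4) show ?thesis
    by auto
qed

theorem theorem1:
  fixes P :: "('c::finite \<times> 'y::finite \<times> bool) pmf"
    and P0 P1 :: "'y pmf"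
    and lam :: "'c \<Rightarrow> real"
  assumes posC: "\<forall>c. probC P c > 0"
    and pbar_pos: "0 < pbar P" and pbar_lt1: "pbar P < 1"
    and lam_range: "\<forall>c. 0 \<le> lam c \<and> lam c \<le> 1"
    and mixture: "\<forall>c y. condY P c y = (1 - lam c) * pmf P0 y + lam c * pmf P1 y"
    and align: "\<forall>c1 \<in> {c. pc P c \<ge> pbar P \<and> lam c \<ge> (\<Sum>c'\<in>UNIV. probC P c' * lam c')}.
                \<forall>c2 \<in> {c. pc P c \<ge> pbar P \<and> lam c \<ge> (\<Sum>c'\<in>UNIV. probC P c' * lam c')}.
                  IG_Z P c1 \<ge> IG_Z P c2 \<longrightarrow> lam c1 \<ge> lam c2"
  shows "let S = {c. pc P c \<ge> pbar P \<and> lam c \<ge> (\<Sum>c'\<in>UNIV. probC P c' * lam c')} in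
           (\<forall>c1\<in>S. \<forall>c2\<in>S. IG_Z P c1 \<ge> IG_Z P c2 \<longrightarrow> IG_Y P c1 \<ge> IG_Y P c2)
         \<and> argmax_on (IG_Z P) S \<subseteq> argmax_on (IG_Y P) S
         \<and> (S \<noteq> {} \<and> (\<exists>!c. c \<in> argmax_on (IG_Y P) S)
              \<longrightarrow> argmax_on (IG_Z P) S = argmax_on (IG_Y P) S)"
proof -
  define lbar where "lbar = (\<Sum>c'\<in>UNIV. probC P c' * lam c')"
  define S where "S = {c. pc P c \<ge> pbar P \<and> lam c \<ge> lbar}"
  have lbar_nonneg: "0 \<le> lbar"
    unfolding lbar_def using posC lam_range by (intro sum_nonneg) (simp add: less_imp_le)
  have IG_Y_mono: "\<forall>c1\<in>S. \<forall>c2\<in>S. IG_Z P c1 \<ge> IG_Z P c2 \<longrightarrow> IG_Y P c1 \<ge> IG_Y P c2"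
  proof (intro ballI impI)
    fix c1 c2 assume c: "c1 \<in> S" "c2 \<in> S" "IG_Z P c1 \<ge> IG_Z P c2"
    then have "lam c2 \<le> lam c1"
      using align unfolding lbar_def[symmetric] S_def[symmetric] by blast
    with c lam_range lbar_nonneg show "IG_Y P c1 \<ge> IG_Y P c2"
      unfolding IG_Y_mixture[OF posC mixture] lbar_def[symmetric] S_def
      by (auto intro: KL_mix_mass_mono)
  qed
  have argmax_subset: "argmax_on (IG_Z P) S \<subseteq> argmax_on (IG_Y P) S"
    using IG_Y_mono by (rule argmax_on_subset_if_mono)
  have "S \<noteq> {} \<and> (\<exists>!c. c \<in> argmax_on (IG_Y P) S) \<longrightarrow> argmax_on (IG_Z P) S = argmax_on (IG_Y P) S"
    using argmax_on_eq_if_unique[OF finite _ argmax_subset] by blast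
  with IG_Y_mono argmax_subset show ?thesis
    unfolding lbar_def[symmetric] S_def[symmetric] Let_def by blast
qed

end
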